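(* Let $E$ be a Banach lattice whose dual $E'$ does not contain any (isomorphic) copy of $\ell_1$. Then $E$ has the weak Grothendieck property.
   Context: $E$ has the weak Grothendieck property if every disjoint weak* null sequence in the dual Banach lattice $E'$ is weakly null. *)

theory Defs
  imports "HOL-Analysis.Analysis"
begin

definition lat_abs :: "'a::{ordered_real_vector, lattice} \<Rightarrow> 'a" where
  "lat_abs x = sup x (- x)"

definition banach_lattice :: "'a::{banach, ordered_real_vector, lattice} itself \<Rightarrow> bool" where
  "banach_lattice _ \<longleftrightarrow> (\<forall>x y::'a. lat_abs x \<le> lat_abs y \<longrightarrow> norm x \<le> norm y)"

text \<open>Its lattice operations are given by the Riesz-Kantorovich formulas:
for x \<ge> 0, |f|(x) = sup { f y : |y| \<le> x } and
(f \<and> g)(x) = inf { f y + g (x - y) : 0 \<le> y \<le> x }.\<close>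

definition dual_abs :: "('a::{banach, ordered_real_vector, lattice} \<Rightarrow>\<^sub>L real) \<Rightarrow> 'a \<Rightarrow> real" where
  "dual_abs f x = Sup {blinfun_apply f y | y. lat_abs y \<le> x}"

definition dual_disjoint ::
  "('a::{banach, ordered_real_vector, lattice} \<Rightarrow>\<^sub>L real) \<Rightarrow> ('a \<Rightarrow>\<^sub>L real) \<Rightarrow> bool" where
  "dual_disjoint f g \<longleftrightarrow>
     (\<forall>x::'a. 0 \<le> x \<longrightarrow> Inf {dual_abs f y + dual_abs g (x - y) | y. 0 \<le> y \<and> y \<le> x} = 0)"

definition disjoint_seq_dual :: "(nat \<Rightarrow> ('a::{banach, ordered_real_vector, lattice} \<Rightarrow>\<^sub>L real)) \<Rightarrow> bool" where
  "disjoint_seq_dual f \<longleftrightarrow> (\<forall>m n. m \<noteq> n \<longrightarrow> dual_disjoint (f m) (f n))"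

definition weak_star_null :: "(nat \<Rightarrow> ('a::real_normed_vector \<Rightarrow>\<^sub>L real)) \<Rightarrow> bool" where
  "weak_star_null f \<longleftrightarrow> (\<forall>x. (\<lambda>n. blinfun_apply (f n) x) \<longlonglongrightarrow> 0)"

definition weakly_null :: "(nat \<Rightarrow> 'b::real_normed_vector) \<Rightarrow> bool" where
  "weakly_null f \<longleftrightarrow> (\<forall>\<phi> :: 'b \<Rightarrow>\<^sub>L real. (\<lambda>n. blinfun_apply \<phi> (f n)) \<longlonglongrightarrow> 0)"

definition weak_grothendieck :: "'a::{banach, ordered_real_vector, lattice} itself \<Rightarrow> bool" where
  "weak_grothendieck _ \<longleftrightarrow>
     (\<forall>f :: nat \<Rightarrow> ('a \<Rightarrow>\<^sub>L real). disjoint_seq_dual f \<and> weak_star_null f \<longrightarrow> weakly_null f)"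

definition l1 :: "(nat \<Rightarrow> real) set" where
  "l1 = {a. summable (\<lambda>n. \<bar>a n\<bar>)}"

definition l1_norm :: "(nat \<Rightarrow> real) \<Rightarrow> real" where
  "l1_norm a = (\<Sum>n. \<bar>a n\<bar>)"

definition contains_l1 :: "'b::real_normed_vector itself \<Rightarrow> bool" where
  "contains_l1 _ \<longleftrightarrow>
     (\<exists>(T :: (nat \<Rightarrow> real) \<Rightarrow> 'b) c C. 0 < c \<and> 0 < C \<and>
        (\<forall>a\<in>l1. \<forall>b\<in>l1. T (\<lambda>n. a n + b n) = T a + T b) \<and>
        (\<forall>a\<in>l1. \<forall>r. T (\<lambda>n. r * a n) = r *\<^sub>R T a) \<and>
        (\<forall>a\<in>l1. c * l1_norm a \<le> norm (T a) \<and> norm (T a) \<le> C * l1_norm a))"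

end

theory Submission
  imports Defs
begin

text \<open>Let \<open>f\<^sub>n\<close> be a disjoint weak* null sequence in \<open>E'\<close>. By uniform boundedness it is bounded,
say by \<open>B\<close>. If it were not weakly null, some \<open>\<phi> \<in> E''\<close> and \<open>\<epsilon> > 0\<close> would give, after passing
to a subsequence and changing signs, functionals \<open>h\<^sub>n\<close> of the form \<open>\<plusminus>f\<^sub>k\<close> with \<open>\<phi>(h\<^sub>n) \<ge> \<epsilon>\<close>.
For disjoint functionals \<open>P, N\<close> the lattice norm satisfies \<open>\<parallel>P + N\<parallel> = \<parallel>P - N\<parallel>\<close>; splitting
\<open>\<Sum> a\<^sub>n h\<^sub>n\<close> into its positive and negative parts thus gives
\<open>\<epsilon> \<Sum> |a\<^sub>n| \<le> \<phi>(\<Sum> |a\<^sub>n| h\<^sub>n) \<le> \<parallel>\<phi>\<parallel> \<parallel>\<Sum> a\<^sub>n h\<^sub>n\<parallel>\<close>, so \<open>(h\<^sub>n)\<close> spans a copy of \<open>\<ell>\<^sub>1\<close>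
in \<open>E'\<close>.\<close>

subsection \<open>The absolute value in a vector lattice\<close>

lemma lat_abs_ge: "(x::'a::{ordered_real_vector, lattice}) \<le> lat_abs x" "- x \<le> lat_abs x"
  by (auto simp: lat_abs_def)

lemma lat_abs_le_iff: "lat_abs (x::'a::{ordered_real_vector, lattice}) \<le> y \<longleftrightarrow> x \<le> y \<and> - x \<le> y"
  by (auto simp: lat_abs_def)

lemma lat_abs_minus [simp]: "lat_abs (- (x::'a::{ordered_real_vector, lattice})) = lat_abs x"
  by (simp add: lat_abs_def sup_commute)

lemma lat_abs_eq_self: "0 \<le> (x::'a::{ordered_real_vector, lattice}) \<Longrightarrow> lat_abs x = x"
  unfolding lat_abs_def by (rule sup_absorb1) (meson neg_le_0_iff_le order.trans)

lemma lat_abs_le_zero_imp_zero: "lat_abs (x::'a::{ordered_real_vector, lattice}) \<le> 0 \<Longrightarrow> x = 0"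
  unfolding lat_abs_le_iff by (simp add: order.antisym)

lemma lat_abs_triangle: "lat_abs ((x::'a::{ordered_real_vector, lattice}) + y) \<le> lat_abs x + lat_abs y"
  unfolding lat_abs_le_iff using lat_abs_ge[of x] lat_abs_ge[of y]
  by (metis add_mono diff_conv_add_uminus minus_add_distrib)

lemma lat_abs_nonneg: "0 \<le> lat_abs (x::'a::{ordered_real_vector, lattice})"
proof -
  have "x + - x \<le> lat_abs x + lat_abs x"
    using lat_abs_ge by (rule add_mono)
  then have "0 \<le> (1/2::real) *\<^sub>R (lat_abs x + lat_abs x)"
    by (intro scaleR_nonneg_nonneg) simp_all
  also have "(1/2::real) *\<^sub>R (lat_abs x + lat_abs x) = lat_abs x"
    by (simp flip: scaleR_add_right scaleR_add_left)
  finally show ?thesis .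
qed

lemma riesz_decomposition:
  fixes x a b :: "'a::{ordered_real_vector, lattice}"
  assumes "0 \<le> a" "0 \<le> b" "lat_abs x \<le> a + b"
  obtains x1 x2 where "x = x1 + x2" "lat_abs x1 \<le> a" "lat_abs x2 \<le> b"
proof -
  define x1 where "x1 = sup (inf x a) (- a)"
  have xab: "x \<le> a + b" "- x \<le> a + b"
    using assms(3) by (auto simp: lat_abs_le_iff)
  have "x1 \<le> a"
    unfolding x1_def using assms(1) by (meson inf_le2 le_supI neg_le_0_iff_le order.trans)
  moreover have "- x1 \<le> a"
    unfolding x1_def by (simp add: minus_le_iff)
  moreover have "x - b \<le> x1"
  proof -
    have "x - b \<le> inf x a"
      using xab assms(2) by (simp add: diff_le_eq add.commute)
    also have "\<dots> \<le> x1"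
      unfolding x1_def by simp
    finally show ?thesis .
  qed
  moreover have "x1 \<le> x + b"
  proof -
    have "inf x a \<le> x + b"
      using assms(2) by (meson add_increasing2 inf_le1 order.refl order.trans)
    moreover have "- a \<le> x + b"
      using xab by (metis add.commute minus_le_iff diff_le_eq diff_minus_eq_add minus_diff_eq)
    ultimately show ?thesis
      unfolding x1_def by simp
  qed
  ultimately show ?thesis
    by (intro that[of x1 "x - x1"]) (auto simp: lat_abs_le_iff algebra_simps)
qed

lemma banach_lattice_norm_mono:
  assumes "banach_lattice TYPE('a::{banach, ordered_real_vector, lattice})"
    and "lat_abs (x::'a) \<le> lat_abs y"
  shows "norm x \<le> norm y"
  using assms unfolding banach_lattice_def by blast

subsection \<open>Disjointness of functionals\<close>

definition abs_le_on_interval :: "('a::{real_normed_vector, ordered_real_vector, lattice} \<Rightarrow>\<^sub>L real) \<Rightarrow> 'a \<Rightarrow> real \<Rightarrow> bool" where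
  "abs_le_on_interval f y d \<longleftrightarrow> (\<forall>z. lat_abs z \<le> y \<longrightarrow> \<bar>f z\<bar> \<le> d)"

text \<open>An \<open>\<epsilon>\<close>-version of the Riesz--Kantorovich formula for \<open>|f| \<and> |g| = 0\<close> that avoids the
suprema defining \<^const>\<open>dual_abs\<close>.\<close>

definition order_disjoint :: "('a::{real_normed_vector, ordered_real_vector, lattice} \<Rightarrow>\<^sub>L real) \<Rightarrow> ('a \<Rightarrow>\<^sub>L real) \<Rightarrow> bool" where
  "order_disjoint f g \<longleftrightarrow>
     (\<forall>x. 0 \<le> x \<longrightarrow> (\<forall>d>0. \<exists>y. 0 \<le> y \<and> y \<le> x \<and> abs_le_on_interval f y d \<and> abs_le_on_interval g (x - y) d))"

lemma abs_le_on_interval_mono: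
  "abs_le_on_interval f y d \<Longrightarrow> y' \<le> y \<Longrightarrow> d \<le> d' \<Longrightarrow> abs_le_on_interval f y' d'"
  unfolding abs_le_on_interval_def by (meson order.trans)

lemma abs_le_on_interval_add:
  "abs_le_on_interval f y d1 \<Longrightarrow> abs_le_on_interval g y d2 \<Longrightarrow> abs_le_on_interval (f + g) y (d1 + d2)"
  unfolding abs_le_on_interval_def
  by (simp add: plus_blinfun.rep_eq) (meson abs_triangle_ineq add_mono order.trans)

lemma abs_le_on_interval_scaleR:
  "abs_le_on_interval f y d \<Longrightarrow> abs_le_on_interval (r *\<^sub>R f) y (\<bar>r\<bar> * d)"
  unfolding abs_le_on_interval_def by (simp add: scaleR_blinfun.rep_eq abs_mult mult_left_mono)

lemma abs_le_on_interval_sup: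
  assumes "0 \<le> y1" "0 \<le> y2" "abs_le_on_interval f y1 d1" "abs_le_on_interval f y2 d2"
  shows "abs_le_on_interval f (sup y1 y2) (d1 + d2)"
  unfolding abs_le_on_interval_def
proof (intro allI impI)
  fix z assume z: "lat_abs z \<le> sup y1 y2"
  also have "sup y1 y2 \<le> y1 + y2"
    using assms(1,2) by (simp add: add_increasing add_increasing2)
  finally obtain z1 z2 where "z = z1 + z2" "lat_abs z1 \<le> y1" "lat_abs z2 \<le> y2"
    using riesz_decomposition[OF assms(1,2)] by blast
  with assms(3,4) show "\<bar>f z\<bar> \<le> d1 + d2"
    unfolding abs_le_on_interval_def by (fastforce simp: blinfun.add_right)
qed

lemma order_disjoint_sym: "order_disjoint f g \<Longrightarrow> order_disjoint g f"
  unfolding order_disjoint_def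
proof (intro allI impI)
  fix x :: 'a and d :: real
  assume "\<forall>x\<ge>0. \<forall>d>0. \<exists>y\<ge>0. y \<le> x \<and> abs_le_on_interval f y d \<and> abs_le_on_interval g (x - y) d"
    and "0 \<le> x" "0 < d"
  then obtain y where "0 \<le> y" "y \<le> x" "abs_le_on_interval f y d" "abs_le_on_interval g (x - y) d"
    by blast
  then show "\<exists>y\<ge>0. y \<le> x \<and> abs_le_on_interval g y d \<and> abs_le_on_interval f (x - y) d"
    by (intro exI[of _ "x - y"]) auto
qed

lemma order_disjoint_zero: "order_disjoint f 0"
  unfolding order_disjoint_def abs_le_on_interval_def
  by (metis abs_zero blinfun.zero_left blinfun.zero_right diff_zero lat_abs_le_zero_imp_zero order.refl less_imp_le)

lemma order_disjoint_scaleR: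
  assumes "order_disjoint f g"
  shows "order_disjoint f (r *\<^sub>R g)"
  unfolding order_disjoint_def
proof (intro allI impI)
  fix x :: 'a and d :: real
  assume "0 \<le> x" "0 < d"
  define d' where "d' = d / (\<bar>r\<bar> + 1)"
  have d': "0 < d'" "\<bar>r\<bar> * d' \<le> d" "d' \<le> d"
    using \<open>0 < d\<close> by (auto simp: d'_def field_simps)
  obtain y where y: "0 \<le> y" "y \<le> x" "abs_le_on_interval f y d'" "abs_le_on_interval g (x - y) d'"
    using assms \<open>0 \<le> x\<close> d'(1) unfolding order_disjoint_def by blast
  have "abs_le_on_interval f y d"
    using y(3) order.refl d'(3) by (rule abs_le_on_interval_mono)
  moreover have "abs_le_on_interval (r *\<^sub>R g) (x - y) d"
    using abs_le_on_interval_scaleR[OF y(4)] order.refl d'(2) by (rule abs_le_on_interval_mono)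
  ultimately show "\<exists>y\<ge>0. y \<le> x \<and> abs_le_on_interval f y d \<and> abs_le_on_interval (r *\<^sub>R g) (x - y) d"
    using y by blast
qed

lemma order_disjoint_add:
  assumes "order_disjoint f g" "order_disjoint f h"
  shows "order_disjoint f (g + h)"
  unfolding order_disjoint_def
proof (intro allI impI)
  fix x :: 'a and d :: real
  assume "0 \<le> x" "0 < d"
  obtain y1 where y1: "0 \<le> y1" "y1 \<le> x" "abs_le_on_interval f y1 (d/2)" "abs_le_on_interval g (x - y1) (d/2)"
    using assms(1) \<open>0 \<le> x\<close> \<open>0 < d\<close> unfolding order_disjoint_def by (meson half_gt_zero)
  obtain y2 where y2: "0 \<le> y2" "y2 \<le> x" "abs_le_on_interval f y2 (d/2)" "abs_le_on_interval h (x - y2) (d/2)"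
    using assms(2) \<open>0 \<le> x\<close> \<open>0 < d\<close> unfolding order_disjoint_def by (meson half_gt_zero)
  have "abs_le_on_interval f (sup y1 y2) d"
    using abs_le_on_interval_sup[OF y1(1) y2(1) y1(3) y2(3)] by simp
  moreover have "abs_le_on_interval g (x - sup y1 y2) (d/2)"
    using y1(4) by (rule abs_le_on_interval_mono) (auto simp: diff_le_eq)
  moreover have "abs_le_on_interval h (x - sup y1 y2) (d/2)"
    using y2(4) by (rule abs_le_on_interval_mono) (auto simp: diff_le_eq)
  ultimately show "\<exists>y\<ge>0. y \<le> x \<and> abs_le_on_interval f y d \<and> abs_le_on_interval (g + h) (x - y) d"
    using y1 y2 by (intro exI[of _ "sup y1 y2"])
      (auto dest: abs_le_on_interval_add intro: le_supI1 simp del: field_sum_of_halves)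
qed

lemma order_disjoint_sum:
  assumes "finite A" "\<And>n. n \<in> A \<Longrightarrow> order_disjoint f (g n)"
  shows "order_disjoint f (\<Sum>n\<in>A. c n *\<^sub>R g n)"
  using assms
proof (induction A rule: finite_induct)
  case empty
  then show ?case by (simp add: order_disjoint_zero)
next
  case (insert a A)
  then have "order_disjoint f (c a *\<^sub>R g a + (\<Sum>n\<in>A. c n *\<^sub>R g n))"
    by (intro order_disjoint_add order_disjoint_scaleR) auto
  with insert.hyps show ?case by simp
qed

lemma order_disjoint_sum_sum:
  assumes "finite A" "finite B" "A \<inter> B = {}" "\<And>m n. m \<noteq> n \<Longrightarrow> order_disjoint (g m) (g n)"
  shows "order_disjoint (\<Sum>n\<in>A. c n *\<^sub>R g n) (\<Sum>n\<in>B. d n *\<^sub>R g n)"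
proof (rule order_disjoint_sym, rule order_disjoint_sum[OF assms(1)])
  fix m assume "m \<in> A"
  have "order_disjoint (g m) (\<Sum>n\<in>B. d n *\<^sub>R g n)"
  proof (rule order_disjoint_sum[OF assms(2)])
    fix n assume "n \<in> B"
    with \<open>m \<in> A\<close> assms(3) have "m \<noteq> n" by auto
    then show "order_disjoint (g m) (g n)" by (rule assms(4))
  qed
  then show "order_disjoint (\<Sum>n\<in>B. d n *\<^sub>R g n) (g m)"
    by (rule order_disjoint_sym)
qed

lemma dual_abs_ge:
  assumes BL: "banach_lattice TYPE('a::{banach, ordered_real_vector, lattice})"
    and "0 \<le> (y::'a)" "lat_abs z \<le> y"
  shows "\<bar>blinfun_apply f z\<bar> \<le> dual_abs f y"
proof -
  let ?S = "{f w | w. lat_abs w \<le> y}"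
  have "bdd_above ?S"
  proof (rule bdd_aboveI)
    fix t assume "t \<in> ?S"
    then obtain w where w: "t = f w" "lat_abs w \<le> y" by blast
    with assms have "norm w \<le> norm y"
      by (metis banach_lattice_norm_mono lat_abs_eq_self)
    then have "\<bar>f w\<bar> \<le> norm f * norm y"
      by (metis norm_blinfun real_norm_def order.trans mult_left_mono norm_ge_zero)
    with w show "t \<le> norm f * norm y" by simp
  qed
  moreover have "f z \<in> ?S"
    using assms(3) by blast
  moreover have "- f z \<in> ?S"
    using assms(3) lat_abs_minus[of z] by (metis (mono_tags, lifting) blinfun.minus_right mem_Collect_eq)
  ultimately show ?thesis
    unfolding dual_abs_def by (metis (no_types, lifting) abs_le_iff cSup_upper)
qed

lemma dual_abs_nonneg:
  assumes "banach_lattice TYPE('a::{banach, ordered_real_vector, lattice})" "0 \<le> (y::'a)"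
  shows "0 \<le> dual_abs f y"
  using dual_abs_ge[OF assms, of 0 f] assms(2) by (simp add: lat_abs_eq_self)

lemma dual_disjoint_imp_order_disjoint:
  assumes BL: "banach_lattice TYPE('a::{banach, ordered_real_vector, lattice})"
    and "dual_disjoint f (g :: 'a \<Rightarrow>\<^sub>L real)"
  shows "order_disjoint f g"
  unfolding order_disjoint_def
proof (intro allI impI)
  fix x :: 'a and d :: real
  assume x: "0 \<le> x" and d: "0 < d"
  let ?I = "{dual_abs f y + dual_abs g (x - y) | y. 0 \<le> y \<and> y \<le> x}"
  have "?I \<noteq> {}"
    using x by blast
  moreover have "bdd_below ?I"
    by (rule bdd_belowI[of _ 0]) (auto intro!: add_nonneg_nonneg dual_abs_nonneg[OF BL])
  moreover have "Inf ?I = 0"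
    using assms(2) x unfolding dual_disjoint_def by blast
  ultimately obtain y where y: "dual_abs f y + dual_abs g (x - y) < d" "0 \<le> y" "y \<le> x"
    using cInf_less_iff[of ?I d] d by auto
  then have "dual_abs f y < d" "dual_abs g (x - y) < d"
    using dual_abs_nonneg[OF BL, of y f] dual_abs_nonneg[OF BL, of "x - y" g] by simp_all
  moreover have "0 \<le> x - y"
    using y by simp
  ultimately have "abs_le_on_interval f y d" "abs_le_on_interval g (x - y) d"
    unfolding abs_le_on_interval_def using y(2) by (meson dual_abs_ge[OF BL] order.trans less_imp_le)+
  with y show "\<exists>y\<ge>0. y \<le> x \<and> abs_le_on_interval f y d \<and> abs_le_on_interval g (x - y) d"
    by blast
qed

lemma order_disjoint_norm_add_le:
  assumes BL: "banach_lattice TYPE('a::{banach, ordered_real_vector, lattice})"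
    and "order_disjoint P (N :: 'a \<Rightarrow>\<^sub>L real)"
  shows "norm (P + N) \<le> norm (P - N)"
proof -
  have one_sided: "(P + N) x \<le> norm (P - N) * norm x" for x
  proof (rule field_le_epsilon)
    \<comment> \<open>Split \<open>x = x1 + x2\<close> with \<open>P\<close> small at \<open>x1\<close> and \<open>N\<close> small at \<open>x2\<close>; then
      \<open>(P + N) x \<approx> (P - N) (x2 - x1)\<close>, and \<open>|x2 - x1| \<le> |x|\<close>.\<close>
    fix e :: real assume "0 < e"
    obtain y where y: "0 \<le> y" "y \<le> lat_abs x"
      "abs_le_on_interval P y (e/4)" "abs_le_on_interval N (lat_abs x - y) (e/4)"
      using assms(2) lat_abs_nonneg \<open>0 < e\<close> unfolding order_disjoint_def
      by (meson divide_pos_pos zero_less_numeral)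
    have "lat_abs x \<le> y + (lat_abs x - y)"
      by simp
    then obtain x1 x2 where x: "x = x1 + x2" "lat_abs x1 \<le> y" "lat_abs x2 \<le> lat_abs x - y"
      using riesz_decomposition y(1,2) by (metis diff_ge_0_iff_ge)
    have small: "\<bar>P x1\<bar> \<le> e/4" "\<bar>N x2\<bar> \<le> e/4"
      using x y unfolding abs_le_on_interval_def by auto
    have "lat_abs (x2 - x1) \<le> lat_abs x2 + lat_abs (- x1)"
      using lat_abs_triangle[of x2 "- x1"] by simp
    also have "\<dots> \<le> lat_abs x"
      using add_mono[OF x(3,2)] by simp
    finally have "norm (x2 - x1) \<le> norm x"
      by (metis BL banach_lattice_norm_mono)
    then have "(P - N) (x2 - x1) \<le> norm (P - N) * norm x"
      by (metis abs_le_D1 norm_blinfun real_norm_def mult_left_mono norm_ge_zero order.trans)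
    moreover have "(P + N) x = (P - N) (x2 - x1) + 2 * P x1 + 2 * N x2"
      using x(1) by (simp add: plus_blinfun.rep_eq minus_blinfun.rep_eq blinfun.add_right blinfun.diff_right)
    ultimately show "(P + N) x \<le> norm (P - N) * norm x + e"
      using small by linarith
  qed
  then have "\<bar>(P + N) x\<bar> \<le> norm (P - N) * norm x" for x
    using one_sided[of x] one_sided[of "- x"] by (simp add: blinfun.minus_right abs_le_iff)
  then show ?thesis
    by (intro norm_blinfun_bound) auto
qed

subsection \<open>Uniform boundedness\<close>

lemma norm_blinfun_le_of_ball:
  fixes g :: "'a::real_normed_vector \<Rightarrow>\<^sub>L 'b::real_normed_vector"
  assumes "0 < e" "\<And>z. norm z < e \<Longrightarrow> norm (g z) \<le> M"
  shows "norm g \<le> 2 * M / e"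
proof (rule norm_blinfun_bound)
  show "0 \<le> 2 * M / e"
    using assms(1) assms(2)[of 0] by simp
  fix x
  show "norm (g x) \<le> 2 * M / e * norm x"
  proof (cases "x = 0")
    case False
    define t where "t = 2 * norm x / e"
    have "0 < t"
      using False assms(1) by (simp add: t_def)
    have "norm (inverse t *\<^sub>R x) < e"
      using False assms(1) by (simp add: t_def)
    then have "norm (g (inverse t *\<^sub>R x)) \<le> M"
      by (rule assms(2))
    moreover have "g x = t *\<^sub>R g (inverse t *\<^sub>R x)"
      using \<open>0 < t\<close> by (simp add: blinfun.scaleR_right)
    ultimately have "norm (g x) \<le> t * M"
      using \<open>0 < t\<close> by (simp add: mult_left_mono)
    then show ?thesis
      by (simp add: t_def ac_simps)
  qed simp
qed

lemma uniform_boundedness: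
  fixes f :: "'i \<Rightarrow> 'a::banach \<Rightarrow>\<^sub>L 'b::real_normed_vector"
  assumes "\<And>x. bounded (range (\<lambda>i. f i x))"
  shows "bounded (range f)"
proof -
  define F where "F k = (\<Inter>i. {x. norm (f i x) \<le> real k})" for k :: nat
  have "closed (F k)" for k
    unfolding F_def by (intro closed_INT ballI closed_Collect_le continuous_intros
      linear_continuous_on blinfun.bounded_linear_right)
  moreover have "\<Union>(range F) = UNIV"
  proof safe
    fix x :: 'a
    obtain b where "\<forall>i. norm (f i x) \<le> b"
      using assms[of x] unfolding bounded_iff by blast
    then have "x \<in> F (nat \<lceil>b\<rceil>)"
      unfolding F_def by (auto intro: order.trans[OF _ real_nat_ceiling_ge])
    then show "x \<in> \<Union>(range F)" by blast
  qed auto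
  ultimately obtain k where "interior (F k) \<noteq> {}"
    using Baire_category_alt[of euclidean "range F"]
    by (auto simp: completely_metrizable_space_euclidean)
  then obtain x0 e where e: "0 < e" "ball x0 e \<subseteq> F k"
    by (meson ex_in_conv mem_interior)
  have "norm (f i z) \<le> 2 * real k" if "norm z < e" for i z
  proof -
    have "x0 + z \<in> F k" "x0 \<in> F k"
      using that e by (auto simp: dist_norm)
    then have "norm (f i (x0 + z)) \<le> real k" "norm (f i x0) \<le> real k"
      unfolding F_def by auto
    moreover have "f i z = f i (x0 + z) - f i x0"
      by (simp add: blinfun.add_right)
    ultimately show ?thesis
      by (metis norm_triangle_le_diff add_mono mult_2)
  qed
  then have "norm (f i) \<le> 2 * (2 * real k) / e" for i
    using e(1) by (blast intro: norm_blinfun_le_of_ball)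
  then show ?thesis
    unfolding bounded_iff by blast
qed

subsection \<open>Copies of \<open>\<ell>\<^sub>1\<close>\<close>

lemma order_disjoint_l1_lower_bound:
  fixes h :: "'i \<Rightarrow> ('a::{banach, ordered_real_vector, lattice} \<Rightarrow>\<^sub>L real)"
    and \<phi> :: "('a \<Rightarrow>\<^sub>L real) \<Rightarrow>\<^sub>L real"
  assumes BL: "banach_lattice TYPE('a)"
    and "finite A"
    and disj: "\<And>m n. m \<noteq> n \<Longrightarrow> order_disjoint (h m) (h n)"
    and \<phi>: "\<And>n. n \<in> A \<Longrightarrow> \<epsilon> \<le> \<phi> (h n)"
  shows "\<epsilon> * (\<Sum>n\<in>A. \<bar>a n\<bar>) \<le> norm \<phi> * norm (\<Sum>n\<in>A. a n *\<^sub>R h n)"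
proof -
  define Ap where "Ap = {n\<in>A. 0 \<le> a n}"
  define Am where "Am = {n\<in>A. a n < 0}"
  have A: "A = Ap \<union> Am" "Ap \<inter> Am = {}" "finite Ap" "finite Am"
    using \<open>finite A\<close> by (auto simp: Ap_def Am_def)
  define P where "P = (\<Sum>n\<in>Ap. a n *\<^sub>R h n)"
  define N where "N = (\<Sum>n\<in>Am. (- a n) *\<^sub>R h n)"
  have sum_eq: "(\<Sum>n\<in>A. a n *\<^sub>R h n) = P - N"
    using A by (simp add: P_def N_def sum.union_disjoint sum_negf)
  have abs_sum_eq: "(\<Sum>n\<in>A. \<bar>a n\<bar> *\<^sub>R h n) = P + N"
  proof -
    have "(\<Sum>n\<in>Ap. \<bar>a n\<bar> *\<^sub>R h n) = P" "(\<Sum>n\<in>Am. \<bar>a n\<bar> *\<^sub>R h n) = N"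
      unfolding P_def N_def by (auto simp: Ap_def Am_def intro!: sum.cong)
    with A show ?thesis
      by (simp add: sum.union_disjoint)
  qed
  have "order_disjoint P N"
    unfolding P_def N_def by (rule order_disjoint_sum_sum[OF A(3,4,2) disj])
  have "\<epsilon> * (\<Sum>n\<in>A. \<bar>a n\<bar>) = (\<Sum>n\<in>A. \<epsilon> * \<bar>a n\<bar>)"
    by (rule sum_distrib_left)
  also have "\<dots> \<le> (\<Sum>n\<in>A. \<bar>a n\<bar> * \<phi> (h n))"
    using \<phi> by (intro sum_mono) (metis abs_ge_zero mult.commute mult_left_mono)
  also have "\<dots> = \<phi> (P + N)"
    by (simp add: abs_sum_eq[symmetric] blinfun.sum_right blinfun.scaleR_right)
  also have "\<dots> \<le> norm \<phi> * norm (P + N)"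
    using norm_blinfun[of \<phi> "P + N"] by simp
  also have "\<dots> \<le> norm \<phi> * norm (P - N)"
    using order_disjoint_norm_add_le[OF BL \<open>order_disjoint P N\<close>] by (simp add: mult_left_mono)
  finally show ?thesis
    by (simp add: sum_eq)
qed

lemma contains_l1I:
  fixes h :: "nat \<Rightarrow> 'b::banach"
  assumes "0 < c" "0 < B" "\<And>n. norm (h n) \<le> B"
    and lower: "\<And>a K. c * (\<Sum>n<K. \<bar>a n\<bar>) \<le> norm (\<Sum>n<K. a n *\<^sub>R h n)"
  shows "contains_l1 TYPE('b)"
proof -
  define T where "T a = (\<Sum>n. a n *\<^sub>R h n)" for a :: "nat \<Rightarrow> real"
  have norm_summable: "summable (\<lambda>n. norm (a n *\<^sub>R h n))"
    and norm_T: "norm (T a) \<le> B * l1_norm a"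
    and summable: "summable (\<lambda>n. a n *\<^sub>R h n)" if "a \<in> l1" for a
  proof -
    have abs_summable: "summable (\<lambda>n. \<bar>a n\<bar> * B)"
      using that unfolding l1_def by (simp add: summable_mult2)
    have bound: "norm (a n *\<^sub>R h n) \<le> \<bar>a n\<bar> * B" for n
      using assms(3) by (simp add: mult_left_mono)
    show norm_summable: "summable (\<lambda>n. norm (a n *\<^sub>R h n))"
      using abs_summable by (rule summable_comparison_test') (simp add: assms(3) mult_left_mono)
    then show "summable (\<lambda>n. a n *\<^sub>R h n)"
      by (rule summable_norm_cancel)
    have "norm (T a) \<le> (\<Sum>n. norm (a n *\<^sub>R h n))"
      unfolding T_def using norm_summable by (rule summable_norm)
    also have "\<dots> \<le> (\<Sum>n. \<bar>a n\<bar> * B)"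
      using bound norm_summable abs_summable by (rule suminf_le)
    also have "\<dots> = B * l1_norm a"
      using that suminf_mult2[of "\<lambda>n. \<bar>a n\<bar>" B] unfolding l1_def l1_norm_def
      by (simp add: mult.commute)
    finally show "norm (T a) \<le> B * l1_norm a" .
  qed
  have "c * l1_norm a \<le> norm (T a)" if "a \<in> l1" for a
  proof (rule LIMSEQ_le)
    show "(\<lambda>K. c * (\<Sum>n<K. \<bar>a n\<bar>)) \<longlonglongrightarrow> c * l1_norm a"
      using that unfolding l1_def l1_norm_def by (intro tendsto_mult_left summable_LIMSEQ) simp
    show "(\<lambda>K. norm (\<Sum>n<K. a n *\<^sub>R h n)) \<longlonglongrightarrow> norm (T a)"
      unfolding T_def using summable[OF that] by (intro tendsto_norm summable_LIMSEQ)
  qed (use lower in blast)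
  moreover have "T (\<lambda>n. a n + b n) = T a + T b" if "a \<in> l1" "b \<in> l1" for a b
    unfolding T_def using suminf_add[OF summable[OF that(1)] summable[OF that(2)]]
    by (simp add: scaleR_add_left)
  moreover have "T (\<lambda>n. r * a n) = r *\<^sub>R T a" if "a \<in> l1" for a r
    unfolding T_def using suminf_scaleR_right[OF summable[OF that], of r] by simp
  ultimately show ?thesis
    unfolding contains_l1_def using assms(1,2) norm_T by (intro exI[of _ T] exI[of _ c] exI[of _ B]) auto
qed

lemma order_disjoint_not_weakly_null_imp_contains_l1:
  fixes f :: "nat \<Rightarrow> ('a::{banach, ordered_real_vector, lattice} \<Rightarrow>\<^sub>L real)"
  assumes BL: "banach_lattice TYPE('a)"
    and disj: "\<And>m n. m \<noteq> n \<Longrightarrow> order_disjoint (f m) (f n)"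
    and "bounded (range f)" "\<not> weakly_null f"
  shows "contains_l1 TYPE('a \<Rightarrow>\<^sub>L real)"
proof -
  obtain B where B: "0 < B" "\<And>n. norm (f n) \<le> B"
    using assms(3) by (auto simp: bounded_pos)
  obtain \<phi> :: "('a \<Rightarrow>\<^sub>L real) \<Rightarrow>\<^sub>L real" and \<epsilon> where "0 < \<epsilon>" "\<And>k. \<exists>n\<ge>k. \<epsilon> \<le> \<bar>\<phi> (f n)\<bar>"
    using assms(4) unfolding weakly_null_def LIMSEQ_iff by (auto simp: not_less)
  then obtain r :: "nat \<Rightarrow> nat" where r: "strict_mono r" "\<And>n. \<epsilon> \<le> \<bar>\<phi> (f (r n))\<bar>"
    using infinite_enumerate[of "{n. \<epsilon> \<le> \<bar>\<phi> (f n)\<bar>}"]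
    unfolding infinite_nat_iff_unbounded_le by auto
  define h where "h n = sgn (\<phi> (f (r n))) *\<^sub>R f (r n)" for n
  have \<phi>_h: "\<epsilon> \<le> \<phi> (h n)" for n
    using r(2)[of n] by (simp add: h_def blinfun.scaleR_right abs_sgn mult.commute)
  have "norm (h n) \<le> B" for n
    using B by (simp add: h_def abs_sgn_eq)
  have h_disj: "order_disjoint (h m) (h n)" if "m \<noteq> n" for m n
  proof -
    have "order_disjoint (f (r m)) (f (r n))"
      using disj that strict_mono_eq[OF r(1)] by metis
    then have "order_disjoint (f (r m)) (h n)"
      unfolding h_def by (rule order_disjoint_scaleR)
    then have "order_disjoint (h n) (h m)"
      unfolding h_def[of m] by (rule order_disjoint_scaleR[OF order_disjoint_sym])
    then show ?thesis
      by (rule order_disjoint_sym)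
  qed
  have "0 < norm \<phi>"
    using \<phi>_h[of 0] \<open>0 < \<epsilon>\<close> by (cases "\<phi> = 0") auto
  show ?thesis
  proof (rule contains_l1I)
    show "0 < \<epsilon> / norm \<phi>"
      using \<open>0 < \<epsilon>\<close> \<open>0 < norm \<phi>\<close> by simp
    show "\<epsilon> / norm \<phi> * (\<Sum>n<K. \<bar>a n\<bar>) \<le> norm (\<Sum>n<K. a n *\<^sub>R h n)" for a K
      using order_disjoint_l1_lower_bound[OF BL finite_lessThan, where h=h and \<epsilon>=\<epsilon> and \<phi>=\<phi> and a=a]
        h_disj \<phi>_h \<open>0 < norm \<phi>\<close>
      by (simp add: field_simps)
  qed fact+
qed

theorem mainTheorem8:
  assumes "banach_lattice TYPE('a::{banach, ordered_real_vector, lattice})"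
    and "\<not> contains_l1 TYPE('a \<Rightarrow>\<^sub>L real)"
  shows "weak_grothendieck TYPE('a)"
  unfolding weak_grothendieck_def
proof (intro allI impI)
  fix f :: "nat \<Rightarrow> ('a \<Rightarrow>\<^sub>L real)"
  assume "disjoint_seq_dual f \<and> weak_star_null f"
  then have disj: "\<And>m n. m \<noteq> n \<Longrightarrow> dual_disjoint (f m) (f n)"
    and weak_star: "\<And>x. (\<lambda>n. f n x) \<longlonglongrightarrow> 0"
    unfolding disjoint_seq_dual_def weak_star_null_def by auto
  have "bounded (range f)"
    using weak_star convergent_imp_bounded by (blast intro: uniform_boundedness)
  moreover have "order_disjoint (f m) (f n)" if "m \<noteq> n" for m n
    using assms(1) disj[OF that] by (rule dual_disjoint_imp_order_disjoint)
  ultimately show "weakly_null f"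
    using order_disjoint_not_weakly_null_imp_contains_l1[OF assms(1)] assms(2) by blast
qed

end
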